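(* Let $\mathcal H$ be an $As^c$-$Mag$-bialgebra, $x\in\mathrm{Prim}\,\mathcal H$ and $y,z\in\bar{\mathcal H}$. Writing $\delta(z)=\sum z_{(1)}\otimes z_{(2)}$, one has $$\delta(as(x,y,z))=\sum as(x,y,z_{(1)})\otimes z_{(2)}.$$
   Context: An $As^c$-$Mag$-bialgebra is a vector space $\mathcal H$ over a field $\mathbb K$ with a bilinear product $\cdot$ (not assumed associative) with two-sided unit $1$ and a coassociative counital coproduct $\Delta$ with $\Delta(1)=1\otimes1$ and $\Delta(x\cdot y)=\Delta(x)\cdot(1\otimes y)+(x\otimes1)\cdot\Delta(y)-x\otimes y$, the product on $\mathcal H\otimes\mathcal H$ being componentwise. $\bar{\mathcal H}$ is the kernel of the counit, $\delta(x)=\Delta(x)-x\otimes1-1\otimes x$ is the reduced coproduct on $\bar{\mathcal H}$, and $\mathrm{Prim}\,\mathcal H=\ker\delta$. The associator is $as(x,y,z)=(x\cdot y)\cdot z-x\cdot(y\cdot z)$. *)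

theory Defs
  imports Complex_Main "HOL-Library.Function_Algebras"
begin

text \<open>
  The algebraic tensor products
  H (x) H and H (x) H (x) H are constructed literally: an element is represented by a
  finite formal sum of elementary tensors (a list of pairs / triples), and two
  representatives denote the same tensor iff the difference of the associated formal
  linear combinations lies in the span of the multilinearity relations (the usual
  quotient construction of the tensor product).
\<close>

definition fscale :: "'k::field \<Rightarrow> ('a \<Rightarrow> 'k) \<Rightarrow> ('a \<Rightarrow> 'k)" where
  "fscale c f = (\<lambda>p. c * f p)"

definition basisv :: "'a \<Rightarrow> 'a \<Rightarrow> 'k::field" where
  "basisv p = (\<lambda>q. if q = p then 1 else 0)"

definition formal :: "'a list \<Rightarrow> 'a \<Rightarrow> 'k::field" where
  "formal ts = (\<lambda>p. of_nat (count_list ts p))"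

definition tensor2_rels :: "('k::field \<Rightarrow> 'h::ab_group_add \<Rightarrow> 'h) \<Rightarrow> ('h \<times> 'h \<Rightarrow> 'k) set" where
  "tensor2_rels sc =
     {basisv (a + a', b) - basisv (a, b) - basisv (a', b) | a a' b. True}
   \<union> {basisv (a, b + b') - basisv (a, b) - basisv (a, b') | a b b'. True}
   \<union> {basisv (sc c a, b) - fscale c (basisv (a, b)) | c a b. True}
   \<union> {basisv (a, sc c b) - fscale c (basisv (a, b)) | c a b. True}"

definition tensor3_rels :: "('k::field \<Rightarrow> 'h::ab_group_add \<Rightarrow> 'h) \<Rightarrow> ('h \<times> 'h \<times> 'h \<Rightarrow> 'k) set" where
  "tensor3_rels sc =
     {basisv (a + a', b, d) - basisv (a, b, d) - basisv (a', b, d) | a a' b d. True}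
   \<union> {basisv (a, b + b', d) - basisv (a, b, d) - basisv (a, b', d) | a b b' d. True}
   \<union> {basisv (a, b, d + d') - basisv (a, b, d) - basisv (a, b, d') | a b d d'. True}
   \<union> {basisv (sc c a, b, d) - fscale c (basisv (a, b, d)) | c a b d. True}
   \<union> {basisv (a, sc c b, d) - fscale c (basisv (a, b, d)) | c a b d. True}
   \<union> {basisv (a, b, sc c d) - fscale c (basisv (a, b, d)) | c a b d. True}"

definition teq2 :: "('k::field \<Rightarrow> 'h::ab_group_add \<Rightarrow> 'h) \<Rightarrow> ('h \<times> 'h) list \<Rightarrow> ('h \<times> 'h) list \<Rightarrow> bool" where
  "teq2 sc ts us \<longleftrightarrow>
     (formal ts - formal us :: 'h \<times> 'h \<Rightarrow> 'k) \<in> module.span fscale (tensor2_rels sc)"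

definition teq3 :: "('k::field \<Rightarrow> 'h::ab_group_add \<Rightarrow> 'h) \<Rightarrow> ('h \<times> 'h \<times> 'h) list \<Rightarrow> ('h \<times> 'h \<times> 'h) list \<Rightarrow> bool" where
  "teq3 sc ts us \<longleftrightarrow>
     (formal ts - formal us :: 'h \<times> 'h \<times> 'h \<Rightarrow> 'k) \<in> module.span fscale (tensor3_rels sc)"

definition tmult :: "('h \<Rightarrow> 'h \<Rightarrow> 'h) \<Rightarrow> ('h \<times> 'h) list \<Rightarrow> ('h \<times> 'h) list \<Rightarrow> ('h \<times> 'h) list" where
  "tmult m ts us = concat (map (\<lambda>(a, b). map (\<lambda>(c, d). (m a c, m b d)) us) ts)"

definition bilinear_op :: "('k::field \<Rightarrow> 'h::ab_group_add \<Rightarrow> 'h) \<Rightarrow> ('h \<Rightarrow> 'h \<Rightarrow> 'h) \<Rightarrow> bool" where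
  "bilinear_op sc m \<longleftrightarrow>
     (\<forall>x x' y. m (x + x') y = m x y + m x' y) \<and>
     (\<forall>x y y'. m x (y + y') = m x y + m x y') \<and>
     (\<forall>c x y. m (sc c x) y = sc c (m x y)) \<and>
     (\<forall>c x y. m x (sc c y) = sc c (m x y))"

definition AsMag_bialgebra ::
  "('k::field \<Rightarrow> 'h::ab_group_add \<Rightarrow> 'h) \<Rightarrow> ('h \<Rightarrow> 'h \<Rightarrow> 'h) \<Rightarrow> 'h \<Rightarrow>
   ('h \<Rightarrow> ('h \<times> 'h) list) \<Rightarrow> ('h \<Rightarrow> 'k) \<Rightarrow> bool" where
  "AsMag_bialgebra sc m one Delta eps \<longleftrightarrow>
     vector_space sc \<and>
     bilinear_op sc m \<and>
     (\<forall>x. m one x = x \<and> m x one = x) \<and>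
     \<comment> \<open>Delta is a linear map H -> H (x) H\<close>
     (\<forall>x y. teq2 sc (Delta (x + y)) (Delta x @ Delta y)) \<and>
     (\<forall>c x. teq2 sc (Delta (sc c x)) (map (\<lambda>(a, b). (sc c a, b)) (Delta x))) \<and>
     \<comment> \<open>coassociativity: (Delta (x) id) Delta = (id (x) Delta) Delta\<close>
     (\<forall>x. teq3 sc (concat (map (\<lambda>(a, b). map (\<lambda>(c, d). (c, d, b)) (Delta a)) (Delta x)))
                  (concat (map (\<lambda>(a, b). map (\<lambda>(c, d). (a, c, d)) (Delta b)) (Delta x)))) \<and>
     \<comment> \<open>eps is a linear form and a counit\<close>
     (\<forall>x y. eps (x + y) = eps x + eps y) \<and>
     (\<forall>c x. eps (sc c x) = c * eps x) \<and>
     (\<forall>x. sum_list (map (\<lambda>(a, b). sc (eps a) b) (Delta x)) = x) \<and>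
     (\<forall>x. sum_list (map (\<lambda>(a, b). sc (eps b) a) (Delta x)) = x) \<and>
     \<comment> \<open>Delta(1) = 1 (x) 1\<close>
     teq2 sc (Delta one) [(one, one)] \<and>
     \<comment> \<open>Delta(x.y) = Delta(x).(1 (x) y) + (x (x) 1).Delta(y) - x (x) y\<close>
     (\<forall>x y. teq2 sc (Delta (m x y))
               (tmult m (Delta x) [(one, y)] @ tmult m [(x, one)] (Delta y) @ [(sc (-1) x, y)]))"

text \<open>Reduced coproduct delta(x) = Delta(x) - x (x) 1 - 1 (x) x (a representative).\<close>
definition rcop :: "('k::field \<Rightarrow> 'h::ab_group_add \<Rightarrow> 'h) \<Rightarrow> 'h \<Rightarrow> ('h \<Rightarrow> ('h \<times> 'h) list) \<Rightarrow> 'h \<Rightarrow> ('h \<times> 'h) list" where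
  "rcop sc one Delta x = Delta x @ [(sc (-1) x, one), (sc (-1) one, x)]"

definition assoc :: "('h \<Rightarrow> 'h \<Rightarrow> 'h::ab_group_add) \<Rightarrow> 'h \<Rightarrow> 'h \<Rightarrow> 'h \<Rightarrow> 'h" where
  "assoc m x y z = m (m x y) z - m x (m y z)"

end

theory Submission
  imports Defs
begin

(*
  Since x is primitive, the compatibility of product and coproduct reduces to
  \<Delta>(x u) = 1 \<otimes> x u + (x \<otimes> 1) \<Delta>(u) for every u.  Expanding \<Delta>((x y) z) and \<Delta>(x (y z))
  with it, the terms \<Sum> x y\<^sub>1 \<otimes> y\<^sub>2 z and x y \<otimes> z occur in both and cancel, leaving
  \<Delta>(as(x,y,z)) = 1 \<otimes> as(x,y,z) + \<Sum> as(x,y,z\<^sub>1) \<otimes> z\<^sub>2, the sum running over \<Delta>(z).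
  Writing \<Delta>(z) = z \<otimes> 1 + 1 \<otimes> z + \<delta>(z) and using as(x,y,1) = 0 gives the claim.
  Tensors are formal sums modulo the bilinearity relations, so the only structural fact
  needed is that f \<otimes> g maps relations to relations for linear f and g.
*)

(* Formal combinations are handled as vectors; pointwise evaluation only on demand. *)
lemmas fun_apply_simps = zero_fun_apply plus_fun_apply minus_apply uminus_apply

declare fun_apply_simps [simp del]

interpretation fun_module: module "fscale :: 'k::field \<Rightarrow> ('a \<Rightarrow> 'k) \<Rightarrow> 'a \<Rightarrow> 'k"
  by unfold_locales (simp_all add: fscale_def fun_eq_iff algebra_simps fun_apply_simps)

lemma formal_Nil [simp]: "formal [] = 0"
  by (simp add: formal_def fun_eq_iff fun_apply_simps)

lemma formal_Cons [simp]: "formal (p # ts) = basisv p + formal ts"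
  by (simp add: formal_def basisv_def fun_eq_iff fun_apply_simps)

lemma formal_append [simp]: "formal (ts @ us) = formal ts + formal us"
  by (induction ts) (simp_all add: algebra_simps)

definition finite_support :: "('a \<Rightarrow> 'k::zero) \<Rightarrow> bool" where
  "finite_support v \<longleftrightarrow> finite {p. v p \<noteq> 0}"

definition pushforward :: "('a \<Rightarrow> 'b) \<Rightarrow> ('a \<Rightarrow> 'k::comm_monoid_add) \<Rightarrow> 'b \<Rightarrow> 'k" where
  "pushforward F v q = (\<Sum>p | v p \<noteq> 0 \<and> F p = q. v p)"

lemma pushforward_eq_sum:
  assumes "finite T" "{p. v p \<noteq> 0 \<and> F p = q} \<subseteq> T" "T \<subseteq> {p. F p = q}"
  shows "pushforward F v q = sum v T"
  unfolding pushforward_def using assms by (intro sum.mono_neutral_left) auto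

lemma finite_support_zero [simp]: "finite_support 0"
  by (simp add: finite_support_def fun_apply_simps)

lemma finite_support_add [simp]:
  "finite_support v \<Longrightarrow> finite_support w \<Longrightarrow> finite_support (v + w :: _ \<Rightarrow> 'k::monoid_add)"
  unfolding finite_support_def fun_apply_simps
  by (rule finite_subset[of _ "{p. v p \<noteq> 0} \<union> {p. w p \<noteq> 0}"]) auto

lemma finite_support_diff [simp]:
  "finite_support v \<Longrightarrow> finite_support w \<Longrightarrow> finite_support (v - w :: _ \<Rightarrow> 'k::ab_group_add)"
  unfolding finite_support_def fun_apply_simps
  by (rule finite_subset[of _ "{p. v p \<noteq> 0} \<union> {p. w p \<noteq> 0}"]) auto

lemma finite_support_fscale [simp]: "finite_support v \<Longrightarrow> finite_support (fscale c v)"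
  unfolding finite_support_def fscale_def by (rule finite_subset[of _ "{p. v p \<noteq> 0}"]) auto

lemma finite_support_basisv [simp]: "finite_support (basisv p :: _ \<Rightarrow> 'k::field)"
  unfolding finite_support_def basisv_def by (rule finite_subset[of _ "{p}"]) auto

lemma finite_support_formal [simp]: "finite_support (formal ts :: _ \<Rightarrow> 'k::field)"
  by (induction ts) simp_all

lemma pushforward_add:
  assumes "finite_support v" "finite_support w"
  shows "pushforward F (v + w) = pushforward F v + pushforward F w"
proof
  fix q
  let ?T = "({p. v p \<noteq> 0} \<union> {p. w p \<noteq> 0}) \<inter> {p. F p = q}"
  have "finite ?T" using assms by (simp add: finite_support_def)
  then have "pushforward F (v + w) q = sum (v + w) ?T" "pushforward F v q = sum v ?T"
      "pushforward F w q = sum w ?T"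
    by (rule pushforward_eq_sum; auto simp: fun_apply_simps)+
  then show "pushforward F (v + w) q = (pushforward F v + pushforward F w) q"
    by (simp add: fun_apply_simps sum.distrib)
qed

lemma pushforward_diff:
  assumes "finite_support v" "finite_support w"
  shows "pushforward F (v - w :: _ \<Rightarrow> 'k::ab_group_add) = pushforward F v - pushforward F w"
proof
  fix q
  let ?T = "({p. v p \<noteq> 0} \<union> {p. w p \<noteq> 0}) \<inter> {p. F p = q}"
  have "finite ?T" using assms by (simp add: finite_support_def)
  then have "pushforward F (v - w) q = sum (v - w) ?T" "pushforward F v q = sum v ?T"
      "pushforward F w q = sum w ?T"
    by (rule pushforward_eq_sum; auto simp: fun_apply_simps)+
  then show "pushforward F (v - w) q = (pushforward F v - pushforward F w) q"
    by (simp add: fun_apply_simps sum_subtractf)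
qed

lemma pushforward_zero [simp]: "pushforward F 0 = 0"
  by (simp add: pushforward_def fun_eq_iff fun_apply_simps)

lemma pushforward_fscale: "pushforward F (fscale c v) = fscale c (pushforward F v)"
  by (cases "c = 0") (simp_all add: pushforward_def fscale_def fun_eq_iff sum_distrib_left)

lemma pushforward_basisv [simp]: "pushforward F (basisv p :: _ \<Rightarrow> 'k::field) = basisv (F p)"
proof
  fix q
  have "{p'. basisv p p' \<noteq> (0::'k) \<and> F p' = q} = (if F p = q then {p} else {})"
    by (auto simp: basisv_def)
  then show "pushforward F (basisv p :: _ \<Rightarrow> 'k) q = basisv (F p) q"
    by (simp add: pushforward_def basisv_def)
qed

lemma formal_map: "(formal (map F ts) :: _ \<Rightarrow> 'k::field) = pushforward F (formal ts)"
proof (induction ts)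
  case (Cons p ts)
  have "pushforward F (basisv p + formal ts :: _ \<Rightarrow> 'k) = basisv (F p) + pushforward F (formal ts)"
    by (simp add: pushforward_add)
  with Cons show ?case by simp
qed simp

lemma pushforward_span:
  assumes "\<And>r. r \<in> R \<Longrightarrow> finite_support r"
    and "\<And>r. r \<in> R \<Longrightarrow> pushforward F r \<in> module.span fscale R'"
    and "v \<in> module.span fscale R"
  shows "pushforward F v \<in> module.span fscale R'"
proof -
  from assms(3) have "finite_support v \<and> pushforward F v \<in> module.span fscale R'"
  proof (induction rule: fun_module.span_induct_alt)
    case (step c r v)
    then have "finite_support r" "finite_support v"
      using assms(1) by auto
    then have "pushforward F (fscale c r + v) = fscale c (pushforward F r) + pushforward F v"
      by (simp add: pushforward_add pushforward_fscale)
    with step \<open>finite_support r\<close> show ?case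
      by (simp add: assms(2) fun_module.span_add fun_module.span_scale)
  qed (simp add: fun_module.span_zero)
  then show ?thesis ..
qed

definition (in vector_space) tensor2_cong :: "('b \<times> 'b \<Rightarrow> 'a) \<Rightarrow> ('b \<times> 'b \<Rightarrow> 'a) \<Rightarrow> bool"
    (infix \<open>\<simeq>\<close> 50) where
  "v \<simeq> w \<longleftrightarrow> v - w \<in> module.span fscale (tensor2_rels scale)"

context vector_space
begin

lemma teq2_iff_tensor2_cong: "teq2 scale ts us \<longleftrightarrow> formal ts \<simeq> formal us"
  by (simp add: teq2_def tensor2_cong_def)

lemma tensor2_cong_refl [simp]: "v \<simeq> v"
  by (simp add: tensor2_cong_def fun_module.span_zero)

lemma tensor2_cong_sym: "v \<simeq> w \<Longrightarrow> w \<simeq> v"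
  unfolding tensor2_cong_def by (drule fun_module.span_neg) simp

lemma tensor2_cong_trans [trans]: "u \<simeq> v \<Longrightarrow> v \<simeq> w \<Longrightarrow> u \<simeq> w"
  unfolding tensor2_cong_def by (drule (1) fun_module.span_add) simp

lemma tensor2_cong_add: "v \<simeq> v' \<Longrightarrow> w \<simeq> w' \<Longrightarrow> v + w \<simeq> v' + w'"
  unfolding tensor2_cong_def by (drule (1) fun_module.span_add) (simp add: add_diff_add)

lemma tensor2_cong_diff: "v \<simeq> v' \<Longrightarrow> w \<simeq> w' \<Longrightarrow> v - w \<simeq> v' - w'"
  unfolding tensor2_cong_def by (drule (1) fun_module.span_diff) (simp add: algebra_simps)

lemma tensor2_cong_relI:
  assumes "v - w \<in> tensor2_rels scale"
  shows "v \<simeq> w"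
  using assms unfolding tensor2_cong_def by (rule fun_module.span_base)

lemma basisv_add_left: "basisv (a + a', b) \<simeq> basisv (a, b) + basisv (a', b)"
  by (rule tensor2_cong_relI) (unfold tensor2_rels_def diff_diff_eq[symmetric], blast)

lemma basisv_add_right: "basisv (a, b + b') \<simeq> basisv (a, b) + basisv (a, b')"
  by (rule tensor2_cong_relI) (unfold tensor2_rels_def diff_diff_eq[symmetric], blast)

lemma basisv_scale_left: "basisv (c *s a, b) \<simeq> fscale c (basisv (a, b))"
  by (rule tensor2_cong_relI) (unfold tensor2_rels_def, blast)

lemma basisv_scale_right: "basisv (a, c *s b) \<simeq> fscale c (basisv (a, b))"
  by (rule tensor2_cong_relI) (unfold tensor2_rels_def, blast)

lemma basisv_uminus_left: "basisv (- a, b) \<simeq> - basisv (a, b)"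
  using basisv_scale_left[of "- 1"] by simp

lemma basisv_uminus_right: "basisv (a, - b) \<simeq> - basisv (a, b)"
  using basisv_scale_right[of _ "- 1"] by simp

lemma basisv_zero_left: "basisv (0, b) \<simeq> 0"
  using basisv_scale_left[of 0] by simp

lemma basisv_diff_left: "basisv (a - a', b) \<simeq> basisv (a, b) - basisv (a', b)"
proof -
  have "basisv (a - a', b) \<simeq> basisv (a, b) + basisv (- a', b)"
    using basisv_add_left[of a "- a'"] by simp
  also have "\<dots> \<simeq> basisv (a, b) + - basisv (a', b)"
    by (intro tensor2_cong_add tensor2_cong_refl basisv_uminus_left)
  finally show ?thesis by simp
qed

lemma basisv_diff_right: "basisv (a, b - b') \<simeq> basisv (a, b) - basisv (a, b')"
proof -
  have "basisv (a, b - b') \<simeq> basisv (a, b) + basisv (a, - b')"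
    using basisv_add_right[of a b "- b'"] by simp
  also have "\<dots> \<simeq> basisv (a, b) + - basisv (a, b')"
    by (intro tensor2_cong_add tensor2_cong_refl basisv_uminus_right)
  finally show ?thesis by simp
qed

lemma formal_map_scale_left:
  "formal (map (\<lambda>(a, b). (c *s a, b)) ts) \<simeq> fscale c (formal ts)"
proof (induction ts)
  case (Cons p ts)
  then show ?case
    by (cases p) (simp add: tensor2_cong_add basisv_scale_left fun_module.scale_right_distrib)
qed simp

lemma formal_map_diff_left:
  "formal (map (\<lambda>(a, b). (f a - g a, b)) ts)
     \<simeq> formal (map (\<lambda>(a, b). (f a, b)) ts) - formal (map (\<lambda>(a, b). (g a, b)) ts)"
proof (induction ts)
  case (Cons p ts)
  obtain a b where p: "p = (a, b)" by (cases p)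
  have "formal (map (\<lambda>(a, b). (f a - g a, b)) (p # ts))
      \<simeq> (basisv (f a, b) - basisv (g a, b))
         + (formal (map (\<lambda>(a, b). (f a, b)) ts) - formal (map (\<lambda>(a, b). (g a, b)) ts))"
    using tensor2_cong_add[OF basisv_diff_left Cons.IH] by (simp add: p)
  then show ?case by (simp add: p add_diff_add)
qed simp

lemma finite_support_tensor2_rels: "r \<in> tensor2_rels scale \<Longrightarrow> finite_support r"
  unfolding tensor2_rels_def by auto

lemma pushforward_tensor2_rels:
  assumes f: "Vector_Spaces.linear scale scale f" and g: "Vector_Spaces.linear scale scale g"
    and r: "r \<in> tensor2_rels scale"
  shows "pushforward (\<lambda>(a, b). (f a, g b)) r \<in> tensor2_rels scale"
proof -
  interpret f: Vector_Spaces.linear scale scale f by (rule f)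
  interpret g: Vector_Spaces.linear scale scale g by (rule g)
  from r show ?thesis
    unfolding tensor2_rels_def
    by (elim UnE CollectE exE conjE)
      (simp_all add: pushforward_diff pushforward_fscale f.add f.scale g.add g.scale, blast+)
qed

lemma tensor2_cong_pushforward:
  assumes "Vector_Spaces.linear scale scale f" "Vector_Spaces.linear scale scale g"
    and "v \<simeq> w" "finite_support v" "finite_support w"
  shows "pushforward (\<lambda>(a, b). (f a, g b)) v \<simeq> pushforward (\<lambda>(a, b). (f a, g b)) w"
proof -
  have "pushforward (\<lambda>(a, b). (f a, g b)) (v - w) \<in> module.span fscale (tensor2_rels scale)"
    using assms(1,2) finite_support_tensor2_rels
    by (intro pushforward_span[OF _ _ assms(3)[unfolded tensor2_cong_def]])
      (auto intro: fun_module.span_base pushforward_tensor2_rels)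
  with assms(4,5) show ?thesis
    by (simp add: tensor2_cong_def pushforward_diff)
qed

lemma formal_map_tensor2_cong:
  assumes "Vector_Spaces.linear scale scale f" "Vector_Spaces.linear scale scale g"
    and "formal ts \<simeq> w" "finite_support w"
  shows "formal (map (\<lambda>(a, b). (f a, g b)) ts) \<simeq> pushforward (\<lambda>(a, b). (f a, g b)) w"
  using tensor2_cong_pushforward[OF assms(1-3)] assms(4) by (simp add: formal_map)

lemma teq2_map:
  assumes "Vector_Spaces.linear scale scale f" "Vector_Spaces.linear scale scale g"
    and "teq2 scale ts us"
  shows "teq2 scale (map (\<lambda>(a, b). (f a, g b)) ts) (map (\<lambda>(a, b). (f a, g b)) us)"
  using formal_map_tensor2_cong[OF assms(1,2) assms(3)[unfolded teq2_iff_tensor2_cong]]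
  by (simp add: teq2_iff_tensor2_cong formal_map)

end

lemma case_prod_pair_comp:
  "(\<lambda>(a, b). (f a, g b)) \<circ> (\<lambda>(a, b). (f' a, g' b)) = (\<lambda>(a, b). (f (f' a), g (g' b)))"
  by (simp add: fun_eq_iff)

lemma tmult_singleton_right: "tmult m ts [(c, d)] = map (\<lambda>(a, b). (m a c, m b d)) ts"
  by (induction ts) (auto simp: tmult_def)

lemma tmult_singleton_left: "tmult m [(c, d)] ts = map (\<lambda>(a, b). (m c a, m d b)) ts"
  by (simp add: tmult_def)

locale asmag_bialgebra =
  fixes sc :: "'k::field \<Rightarrow> 'h::ab_group_add \<Rightarrow> 'h"
    and m :: "'h \<Rightarrow> 'h \<Rightarrow> 'h" and one :: 'h
    and Delta :: "'h \<Rightarrow> ('h \<times> 'h) list" and eps :: "'h \<Rightarrow> 'k"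
  assumes asmag: "AsMag_bialgebra sc m one Delta eps"

sublocale asmag_bialgebra \<subseteq> vector_space sc
  using asmag by (simp add: AsMag_bialgebra_def)

context asmag_bialgebra
begin

(* The infix syntax of vector_space is not inherited through the sublocale. *)
notation tensor2_cong (infix \<open>\<simeq>\<close> 50)

lemma mult_one_left [simp]: "m one a = a"
  and mult_one_right [simp]: "m a one = a"
  using asmag by (simp_all add: AsMag_bialgebra_def)

lemma mult_add_left: "m (a + a') b = m a b + m a' b"
  and mult_add_right: "m a (b + b') = m a b + m a b'"
  and mult_scale_left: "m (sc c a) b = sc c (m a b)"
  and mult_scale_right: "m a (sc c b) = sc c (m a b)"
  using asmag by (simp_all add: AsMag_bialgebra_def bilinear_op_def)

lemma mult_uminus_left [simp]: "m (- a) b = - m a b"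
  using mult_scale_left[of "- 1" a b] by simp

lemma mult_uminus_right [simp]: "m a (- b) = - m a b"
  using mult_scale_right[of a "- 1" b] by simp

lemma linear_mult_left: "Vector_Spaces.linear sc sc (m u)"
  using vector_space_axioms
  by (simp add: Vector_Spaces.linear_iff mult_add_right mult_scale_right)

lemma linear_mult_right: "Vector_Spaces.linear sc sc (\<lambda>a. m a v)"
  using vector_space_axioms
  by (simp add: Vector_Spaces.linear_iff mult_add_left mult_scale_left)

lemma linear_assoc: "Vector_Spaces.linear sc sc (assoc m x y)"
proof -
  interpret l: Vector_Spaces.linear sc sc "m (m x y)" by (rule linear_mult_left)
  interpret r: Vector_Spaces.linear sc sc "\<lambda>a. m x (m y a)"
    using Vector_Spaces.linear_compose[OF linear_mult_left linear_mult_left]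
    by (simp add: comp_def)
  show ?thesis
    using vector_space_axioms
    by (simp add: Vector_Spaces.linear_iff assoc_def l.add l.scale r.add r.scale
        scale_right_diff_distrib)
qed

lemma Delta_add: "formal (Delta (a + b)) \<simeq> formal (Delta a) + formal (Delta b)"
  using asmag by (simp add: AsMag_bialgebra_def teq2_iff_tensor2_cong)

lemma Delta_scale: "formal (Delta (sc c a)) \<simeq> fscale c (formal (Delta a))"
proof -
  have "formal (Delta (sc c a)) \<simeq> formal (map (\<lambda>(a, b). (sc c a, b)) (Delta a))"
    using asmag by (simp add: AsMag_bialgebra_def teq2_iff_tensor2_cong)
  also have "\<dots> \<simeq> fscale c (formal (Delta a))"
    by (rule formal_map_scale_left)
  finally show ?thesis .
qed

lemma Delta_diff: "formal (Delta (a - b)) \<simeq> formal (Delta a) - formal (Delta b)"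
proof -
  have "formal (Delta (a - b)) \<simeq> formal (Delta a) + formal (Delta (sc (- 1) b))"
    using Delta_add[of a "sc (- 1) b"] by simp
  also have "\<dots> \<simeq> formal (Delta a) + fscale (- 1) (formal (Delta b))"
    by (intro tensor2_cong_add tensor2_cong_refl Delta_scale)
  finally show ?thesis by simp
qed

lemma Delta_mult:
  "formal (Delta (m u v))
     \<simeq> formal (map (\<lambda>(a, b). (a, m b v)) (Delta u)) + formal (map (\<lambda>(a, b). (m u a, b)) (Delta v))
        - basisv (u, v)"
proof -
  have "formal (Delta (m u v))
      \<simeq> formal (map (\<lambda>(a, b). (a, m b v)) (Delta u)) + formal (map (\<lambda>(a, b). (m u a, b)) (Delta v))
         + basisv (- u, v)"
    using asmag
    by (simp add: AsMag_bialgebra_def teq2_iff_tensor2_cong tmult_singleton_left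
        tmult_singleton_right add.assoc)
  also have "\<dots> \<simeq> formal (map (\<lambda>(a, b). (a, m b v)) (Delta u))
      + formal (map (\<lambda>(a, b). (m u a, b)) (Delta v)) + - basisv (u, v)"
    by (intro tensor2_cong_add tensor2_cong_refl basisv_uminus_left)
  finally show ?thesis by simp
qed

lemma Delta_primitive:
  assumes "teq2 sc (rcop sc one Delta x) []"
  shows "formal (Delta x) \<simeq> basisv (x, one) + basisv (one, x)"
proof -
  have "formal (Delta x) + basisv (- x, one) + basisv (- one, x) \<simeq> 0"
    using assms by (simp add: teq2_iff_tensor2_cong rcop_def add.assoc)
  then have "formal (Delta x) + basisv (- x, one) + basisv (- one, x) - basisv (- x, one)
      - basisv (- one, x) \<simeq> 0 - - basisv (x, one) - - basisv (one, x)"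
    by (intro tensor2_cong_diff basisv_uminus_left)
  then show ?thesis by simp
qed

lemma Delta_mult_primitive:
  assumes "teq2 sc (rcop sc one Delta x) []"
  shows "formal (Delta (m x u)) \<simeq> basisv (one, m x u) + formal (map (\<lambda>(a, b). (m x a, b)) (Delta u))"
proof -
  have "formal (map (\<lambda>(a, b). (a, m b u)) (Delta x))
      \<simeq> pushforward (\<lambda>(a, b). (a, m b u)) (basisv (x, one) + basisv (one, x))"
    by (rule formal_map_tensor2_cong[OF linear_ident linear_mult_right Delta_primitive[OF assms]])
      simp
  also have "\<dots> = basisv (x, u) + basisv (one, m x u)"
    by (simp add: pushforward_add)
  finally have Delta_x: "formal (map (\<lambda>(a, b). (a, m b u)) (Delta x))
      \<simeq> basisv (x, u) + basisv (one, m x u)" .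
  have "formal (Delta (m x u))
      \<simeq> formal (map (\<lambda>(a, b). (a, m b u)) (Delta x)) + formal (map (\<lambda>(a, b). (m x a, b)) (Delta u))
         - basisv (x, u)"
    by (rule Delta_mult)
  also have "\<dots> \<simeq> basisv (x, u) + basisv (one, m x u) + formal (map (\<lambda>(a, b). (m x a, b)) (Delta u))
      - basisv (x, u)"
    by (intro tensor2_cong_add tensor2_cong_diff tensor2_cong_refl Delta_x)
  finally show ?thesis by simp
qed

lemma Delta_mult_left_bracket:
  assumes "teq2 sc (rcop sc one Delta x) []"
  shows "formal (Delta (m (m x y) z))
    \<simeq> basisv (one, m (m x y) z) + formal (map (\<lambda>(a, b). (m x a, m b z)) (Delta y))
       + formal (map (\<lambda>(a, b). (m (m x y) a, b)) (Delta z)) - basisv (m x y, z)"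
proof -
  have "formal (map (\<lambda>(a, b). (a, m b z)) (Delta (m x y)))
      \<simeq> pushforward (\<lambda>(a, b). (a, m b z))
           (basisv (one, m x y) + formal (map (\<lambda>(a, b). (m x a, b)) (Delta y)))"
    by (rule formal_map_tensor2_cong[OF linear_ident linear_mult_right Delta_mult_primitive[OF assms]])
      simp
  also have "\<dots> = basisv (one, m (m x y) z) + formal (map (\<lambda>(a, b). (m x a, m b z)) (Delta y))"
    by (simp add: pushforward_add formal_map[symmetric] case_prod_pair_comp)
  finally have Delta_xy: "formal (map (\<lambda>(a, b). (a, m b z)) (Delta (m x y)))
      \<simeq> basisv (one, m (m x y) z) + formal (map (\<lambda>(a, b). (m x a, m b z)) (Delta y))" .
  have "formal (Delta (m (m x y) z))
      \<simeq> formal (map (\<lambda>(a, b). (a, m b z)) (Delta (m x y)))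
         + formal (map (\<lambda>(a, b). (m (m x y) a, b)) (Delta z)) - basisv (m x y, z)"
    by (rule Delta_mult)
  also have "\<dots> \<simeq> basisv (one, m (m x y) z) + formal (map (\<lambda>(a, b). (m x a, m b z)) (Delta y))
       + formal (map (\<lambda>(a, b). (m (m x y) a, b)) (Delta z)) - basisv (m x y, z)"
    by (intro tensor2_cong_add tensor2_cong_diff tensor2_cong_refl Delta_xy)
  finally show ?thesis .
qed

lemma Delta_mult_right_bracket:
  assumes "teq2 sc (rcop sc one Delta x) []"
  shows "formal (Delta (m x (m y z)))
    \<simeq> basisv (one, m x (m y z)) + formal (map (\<lambda>(a, b). (m x a, m b z)) (Delta y))
       + formal (map (\<lambda>(a, b). (m x (m y a), b)) (Delta z)) - basisv (m x y, z)"
proof -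
  have "formal (map (\<lambda>(a, b). (m x a, b)) (Delta (m y z)))
      \<simeq> pushforward (\<lambda>(a, b). (m x a, b))
           (formal (map (\<lambda>(a, b). (a, m b z)) (Delta y))
            + formal (map (\<lambda>(a, b). (m y a, b)) (Delta z)) - basisv (y, z))"
    by (rule formal_map_tensor2_cong[OF linear_mult_left linear_ident Delta_mult]) simp
  also have "\<dots> = formal (map (\<lambda>(a, b). (m x a, m b z)) (Delta y))
      + formal (map (\<lambda>(a, b). (m x (m y a), b)) (Delta z)) - basisv (m x y, z)"
    by (simp add: pushforward_add pushforward_diff formal_map[symmetric] case_prod_pair_comp)
  finally have Delta_yz: "formal (map (\<lambda>(a, b). (m x a, b)) (Delta (m y z)))
      \<simeq> formal (map (\<lambda>(a, b). (m x a, m b z)) (Delta y))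
         + formal (map (\<lambda>(a, b). (m x (m y a), b)) (Delta z)) - basisv (m x y, z)" .
  have "formal (Delta (m x (m y z)))
      \<simeq> basisv (one, m x (m y z)) + formal (map (\<lambda>(a, b). (m x a, b)) (Delta (m y z)))"
    by (rule Delta_mult_primitive[OF assms])
  also have "\<dots> \<simeq> basisv (one, m x (m y z)) + (formal (map (\<lambda>(a, b). (m x a, m b z)) (Delta y))
      + formal (map (\<lambda>(a, b). (m x (m y a), b)) (Delta z)) - basisv (m x y, z))"
    by (intro tensor2_cong_add tensor2_cong_refl Delta_yz)
  finally show ?thesis by (simp add: add.assoc add_diff_eq)
qed

lemma Delta_assoc_primitive:
  assumes "teq2 sc (rcop sc one Delta x) []"
  shows "formal (Delta (assoc m x y z))
    \<simeq> basisv (one, assoc m x y z) + formal (map (\<lambda>(a, b). (assoc m x y a, b)) (Delta z))"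
proof -
  let ?P = "formal (map (\<lambda>(a, b). (m x a, m b z)) (Delta y))"
  let ?Q = "formal (map (\<lambda>(a, b). (m (m x y) a, b)) (Delta z))"
  let ?R = "formal (map (\<lambda>(a, b). (m x (m y a), b)) (Delta z))"
  have "formal (Delta (assoc m x y z)) \<simeq> formal (Delta (m (m x y) z)) - formal (Delta (m x (m y z)))"
    unfolding assoc_def by (rule Delta_diff)
  also have "\<dots> \<simeq> (basisv (one, m (m x y) z) + ?P + ?Q - basisv (m x y, z))
      - (basisv (one, m x (m y z)) + ?P + ?R - basisv (m x y, z))"
    by (intro tensor2_cong_diff Delta_mult_left_bracket Delta_mult_right_bracket assms)
  also have "\<dots> = (basisv (one, m (m x y) z) - basisv (one, m x (m y z))) + (?Q - ?R)"
    by (simp add: algebra_simps)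
  also have "\<dots> \<simeq> basisv (one, assoc m x y z) + formal (map (\<lambda>(a, b). (assoc m x y a, b)) (Delta z))"
    unfolding assoc_def
    by (intro tensor2_cong_add tensor2_cong_sym[OF basisv_diff_right]
        tensor2_cong_sym[OF formal_map_diff_left])
  finally show ?thesis .
qed

lemma formal_rcop:
  "formal (rcop sc one Delta u) = formal (Delta u) + basisv (- u, one) + basisv (- one, u)"
  by (simp add: rcop_def add.assoc)

lemma rcop_assoc_primitive:
  assumes "teq2 sc (rcop sc one Delta x) []"
  shows "formal (rcop sc one Delta (assoc m x y z))
    \<simeq> formal (map (\<lambda>(a, b). (assoc m x y a, b)) (Delta z)) + basisv (- assoc m x y z, one)"
proof -
  have "formal (Delta (assoc m x y z)) + basisv (- assoc m x y z, one) + basisv (- one, assoc m x y z)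
      \<simeq> basisv (one, assoc m x y z) + formal (map (\<lambda>(a, b). (assoc m x y a, b)) (Delta z))
         + basisv (- assoc m x y z, one) + - basisv (one, assoc m x y z)"
    by (intro tensor2_cong_add tensor2_cong_refl basisv_uminus_left Delta_assoc_primitive assms)
  also have "\<dots> = formal (map (\<lambda>(a, b). (assoc m x y a, b)) (Delta z)) + basisv (- assoc m x y z, one)"
    by (simp add: algebra_simps)
  finally show ?thesis unfolding formal_rcop .
qed

lemma map_assoc_rcop:
  "formal (map (\<lambda>(a, b). (assoc m x y a, b)) (rcop sc one Delta z))
    \<simeq> formal (map (\<lambda>(a, b). (assoc m x y a, b)) (Delta z)) + basisv (- assoc m x y z, one)"
proof -
  have "formal (map (\<lambda>(a, b). (assoc m x y a, b)) (Delta z)) + basisv (- assoc m x y z, one)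
      + basisv (0, z)
      \<simeq> formal (map (\<lambda>(a, b). (assoc m x y a, b)) (Delta z)) + basisv (- assoc m x y z, one) + 0"
    by (intro tensor2_cong_add tensor2_cong_refl basisv_zero_left)
  then show ?thesis by (simp add: rcop_def assoc_def add.assoc)
qed

end

theorem lemma2p7:
  fixes sc :: "'k::field \<Rightarrow> 'h::ab_group_add \<Rightarrow> 'h"
    and m :: "'h \<Rightarrow> 'h \<Rightarrow> 'h" and one :: 'h
    and Delta :: "'h \<Rightarrow> ('h \<times> 'h) list" and eps :: "'h \<Rightarrow> 'k"
    and x y z :: 'h and zs :: "('h \<times> 'h) list"
  assumes H: "AsMag_bialgebra sc m one Delta eps"
    and x_bar: "eps x = 0" and x_prim: "teq2 sc (rcop sc one Delta x) []"
    and y_bar: "eps y = 0" and z_bar: "eps z = 0"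
    and zs: "teq2 sc zs (rcop sc one Delta z)"
  shows "teq2 sc (rcop sc one Delta (assoc m x y z)) (map (\<lambda>(a, b). (assoc m x y a, b)) zs)"
proof -
  interpret asmag_bialgebra sc m one Delta eps using H by (rule asmag_bialgebra.intro)
  have "formal (map (\<lambda>(a, b). (assoc m x y a, b)) zs)
      \<simeq> formal (map (\<lambda>(a, b). (assoc m x y a, b)) (rcop sc one Delta z))"
    using teq2_map[OF linear_assoc linear_ident zs] by (simp add: teq2_iff_tensor2_cong)
  also have "\<dots> \<simeq> formal (map (\<lambda>(a, b). (assoc m x y a, b)) (Delta z)) + basisv (- assoc m x y z, one)"
    by (rule map_assoc_rcop)
  also have "\<dots> \<simeq> formal (rcop sc one Delta (assoc m x y z))"
    by (rule tensor2_cong_sym[OF rcop_assoc_primitive[OF x_prim]])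
  finally show ?thesis
    unfolding teq2_iff_tensor2_cong by (rule tensor2_cong_sym)
qed

end
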